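(* Consider an open quantum system on a finite-dimensional Hilbert space $\mathcal H$ with Hamiltonian $H$ and coupling operators $L_1,\dots,L_K$. Let $W_1,\dots,W_N$ be observables on $\mathcal H$ commuting with $H$, each positive semidefinite with smallest eigenvalue $0$, and let $W=\sum_{\lambda=1}^NW_\lambda$. If Condition ES holds for each $W_\lambda$ (respectively, Condition DS holds for each $W_\lambda$), then for every initial density state the system converges asymptotically to the set of ground states of $W$. In addition, $W$ is a Lyapunov operator.
   Context: The density state (positive semidefinite, trace one) evolves by $\dot\rho_t=-i[H,\rho_t]+\sum_{k=1}^K\big(L_k\rho_tL_k^\dagger-\tfrac12L_k^\dagger L_k\rho_t-\tfrac12\rho_tL_k^\dagger L_k\big)$. For an observable $X$ commuting with $H$ the generator is $\mathcal G(X)=\sum_{k=1}^K\big(L_k^\dagger XL_k-\tfrac12L_k^\dagger L_kX-\tfrac12XL_k^\dagger L_k\big)$, and $\frac{d}{dt}\operatorname{tr}(X\rho_t)=\operatorname{tr}(\mathcal G(X)\rho_t)$. Dissipation functional: $\mathfrak D(X)=\mathcal G(X^\dagger X)-\mathcal G(X^\dagger)X-X^\dagger\mathcal G(X)$. Condition ES for $X$: there is $c>0$ with $\mathcal G(X)\le-cX$. Condition DS for $X$: $\mathcal G(X)\le0$ and there is $c>0$ with $cX\le\mathfrak D(X)$. A Lyapunov operator is a self-adjoint $V\ge0$ with smallest eigenvalue $0$ and $\mathcal G(V)\le0$. Convergence to the set of ground states of $W$ means every limit point of $\rho_t$ as $t\to\infty$ lies in the set of density states $\rho$ with $\operatorname{tr}(W\rho)$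 equal to the smallest eigenvalue of $W$. *)

theory Defs
  imports "HOL-Analysis.Analysis"
begin

text \<open>Operators on the finite-dimensional Hilbert space are complex square matrices
  indexed by a finite type 'n.\<close>

type_synonym 'n op = "complex^'n^'n"

definition madj :: "'n::finite op \<Rightarrow> 'n op" where
  "madj A = (\<chi> i j. cnj (A $ j $ i))"

definition csmult :: "complex \<Rightarrow> 'n::finite op \<Rightarrow> 'n op" where
  "csmult c A = (\<chi> i j. c * A $ i $ j)"

definition self_adjoint :: "'n::finite op \<Rightarrow> bool" where
  "self_adjoint A \<longleftrightarrow> madj A = A"

definition psd :: "'n::finite op \<Rightarrow> bool" where
  "psd A \<longleftrightarrow> (\<forall>x::complex^'n. (\<Sum>i\<in>UNIV. cnj (x $ i) * (A *v x) $ i) \<in> \<real> \<and>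
                     0 \<le> Re (\<Sum>i\<in>UNIV. cnj (x $ i) * (A *v x) $ i))"

definition loewner_le :: "'n::finite op \<Rightarrow> 'n op \<Rightarrow> bool" where
  "loewner_le A B \<longleftrightarrow> psd (B - A)"

definition is_eigenvalue :: "'n::finite op \<Rightarrow> complex \<Rightarrow> bool" where
  "is_eigenvalue A c \<longleftrightarrow> (\<exists>v. v \<noteq> 0 \<and> A *v v = c *s v)"

text \<open>Smallest eigenvalue of a self-adjoint operator (whose eigenvalues are real).\<close>
definition min_eig :: "'n::finite op \<Rightarrow> real" where
  "min_eig A = Min {l::real. is_eigenvalue A (complex_of_real l)}"

definition density_state :: "'n::finite op \<Rightarrow> bool" where
  "density_state \<rho> \<longleftrightarrow> psd \<rho> \<and> trace \<rho> = 1"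

text \<open>Generator (Heisenberg picture, dissipative part) for coupling operators L 0, ..., L (K-1).\<close>
definition gen :: "nat \<Rightarrow> (nat \<Rightarrow> 'n::finite op) \<Rightarrow> 'n op \<Rightarrow> 'n op" where
  "gen K L X = (\<Sum>k<K. madj (L k) ** X ** L k
                  - csmult (1/2) (madj (L k) ** L k ** X)
                  - csmult (1/2) (X ** madj (L k) ** L k))"

definition lindblad :: "'n::finite op \<Rightarrow> nat \<Rightarrow> (nat \<Rightarrow> 'n op) \<Rightarrow> 'n op \<Rightarrow> 'n op" where
  "lindblad H K L \<rho> = csmult (- \<i>) (H ** \<rho> - \<rho> ** H)
     + (\<Sum>k<K. L k ** \<rho> ** madj (L k)
                - csmult (1/2) (madj (L k) ** L k ** \<rho>)
                - csmult (1/2) (\<rho> ** madj (L k) ** L k))"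

definition dissip :: "nat \<Rightarrow> (nat \<Rightarrow> 'n::finite op) \<Rightarrow> 'n op \<Rightarrow> 'n op" where
  "dissip K L X = gen K L (madj X ** X) - gen K L (madj X) ** X - madj X ** gen K L X"

definition condition_ES :: "nat \<Rightarrow> (nat \<Rightarrow> 'n::finite op) \<Rightarrow> 'n op \<Rightarrow> bool" where
  "condition_ES K L X \<longleftrightarrow> (\<exists>c>0. loewner_le (gen K L X) (- (c *\<^sub>R X)))"

definition condition_DS :: "nat \<Rightarrow> (nat \<Rightarrow> 'n::finite op) \<Rightarrow> 'n op \<Rightarrow> bool" where
  "condition_DS K L X \<longleftrightarrow> loewner_le (gen K L X) 0 \<and> (\<exists>c>0. loewner_le (c *\<^sub>R X) (dissip K L X))"

definition lyapunov_op :: "nat \<Rightarrow> (nat \<Rightarrow> 'n::finite op) \<Rightarrow> 'n op \<Rightarrow> bool" where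
  "lyapunov_op K L V \<longleftrightarrow> self_adjoint V \<and> psd V \<and> min_eig V = 0 \<and> loewner_le (gen K L V) 0"

definition limit_point_at_top :: "(real \<Rightarrow> 'n::finite op) \<Rightarrow> 'n op \<Rightarrow> bool" where
  "limit_point_at_top \<rho> \<sigma> \<longleftrightarrow>
     (\<exists>s::nat \<Rightarrow> real. filterlim s at_top sequentially \<and> (\<lambda>k. \<rho> (s k)) \<longlonglongrightarrow> \<sigma>)"

definition ground_states :: "'n::finite op \<Rightarrow> 'n op set" where
  "ground_states W = {\<rho>. density_state \<rho> \<and> trace (W ** \<rho>) = complex_of_real (min_eig W)}"

definition converges_to_ground_states :: "(real \<Rightarrow> 'n::finite op) \<Rightarrow> 'n op \<Rightarrow> bool" where
  "converges_to_ground_states \<rho> W \<longleftrightarrow> (\<forall>\<sigma>. limit_point_at_top \<rho> \<sigma> \<longrightarrow> \<sigma> \<in> ground_states W)"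

end

theory Submission
  imports Defs "HOL-Real_Asymp.Real_Asymp"
begin

text \<open>For each W_l the expectation Tr(W_l \<rho>_t) is nonnegative and, since W_l commutes with H,
  has derivative Tr(G(W_l) \<rho>_t). Under ES it decays exponentially. Under DS it is
  nonincreasing; if it stayed above some v > 0, then completing the square with
  D(W_l) \<ge> c W_l shows that Tr(W_l W_l \<rho>_t) - Tr(W_l \<rho>_t)/\<delta> grows linearly, contradicting
  boundedness. Hence Tr(W \<rho>_t) \<rightarrow> 0, and every limit point \<sigma> is a density state with
  W \<sigma> = 0.

  This needs that the flow preserves density states: self-adjointness by uniqueness for
  linear ODEs, the trace because G(1) = 0, and positivity by a first-touching argument for
  \<rho>_t + \<epsilon> exp(a t) 1. At a unit vector x in the kernel of this perturbed state the
  Lindblad vector field has a nonnegative quadratic form, and choosing a larger than the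
  size of the Lindbladian at the identity makes the exponential term win, so the perturbed
  state can never reach the boundary of the positive cone.\<close>

section \<open>Matrix algebra\<close>

lemma madj_nth [simp]: "madj A $ i $ j = cnj (A $ j $ i)"
  by (simp add: madj_def)

lemma csmult_nth [simp]: "csmult c A $ i $ j = c * A $ i $ j"
  by (simp add: csmult_def)

lemma scaleR_matrix_nth: "(r *\<^sub>R A) $ i $ j = of_real r * (A $ i $ j :: complex)"
  by (simp add: scaleR_conv_of_real[symmetric])

lemma madj_madj [simp]: "madj (madj A) = A"
  by (simp add: vec_eq_iff)

lemma madj_add: "madj (A + B) = madj A + madj B"
  by (simp add: vec_eq_iff)

lemma madj_diff: "madj (A - B) = madj A - madj B"
  by (simp add: vec_eq_iff)

lemma madj_scaleR: "madj (r *\<^sub>R A) = r *\<^sub>R madj A"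
  by (simp add: vec_eq_iff)

lemma madj_csmult: "madj (csmult c A) = csmult (cnj c) (madj A)"
  by (simp add: vec_eq_iff)

lemma madj_matrix_mult: "madj (A ** B) = madj B ** madj A"
  by (simp add: vec_eq_iff matrix_matrix_mult_def mult.commute)

lemma madj_mat1 [simp]: "madj (mat 1) = mat 1"
  by (simp add: vec_eq_iff mat_def)

lemma madj_sum: "madj (\<Sum>k<(K::nat). f k) = (\<Sum>k<K. madj (f k))"
  by (induction K) (simp_all add: madj_add vec_eq_iff)

lemma self_adjoint_sum:
  "(\<And>k. k < K \<Longrightarrow> self_adjoint (f k)) \<Longrightarrow> self_adjoint (\<Sum>k<(K::nat). f k)"
  by (simp add: self_adjoint_def madj_sum)

lemma self_adjoint_entry: "self_adjoint A \<Longrightarrow> cnj (A $ i $ j) = A $ j $ i"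
  by (metis madj_nth self_adjoint_def)

lemma matrix_mul_lzero [simp]: "0 ** (C::'n::finite op) = 0"
  by (simp add: vec_eq_iff matrix_matrix_mult_def)

lemma matrix_add_rdistrib: "(A + B) ** C = A ** C + B ** (C::'n::finite op)"
  by (simp add: vec_eq_iff matrix_matrix_mult_def algebra_simps sum.distrib)

lemma matrix_diff_rdistrib: "(A - B) ** C = A ** C - B ** (C::'n::finite op)"
  by (simp add: vec_eq_iff matrix_matrix_mult_def algebra_simps sum_subtractf)

lemma matrix_diff_ldistrib: "C ** (A - B) = C ** A - C ** (B::'n::finite op)"
  by (simp add: vec_eq_iff matrix_matrix_mult_def algebra_simps sum_subtractf)

lemma matrix_scaleR_left: "(r *\<^sub>R A) ** C = r *\<^sub>R (A ** (C::'n::finite op))"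
  by (simp add: vec_eq_iff matrix_matrix_mult_def scaleR_sum_right)

lemma matrix_scaleR_right: "C ** (r *\<^sub>R A) = r *\<^sub>R (C ** (A::'n::finite op))"
  by (simp add: vec_eq_iff matrix_matrix_mult_def scaleR_sum_right)

lemma matrix_csmult_left: "csmult c A ** C = csmult c (A ** (C::'n::finite op))"
  by (simp add: vec_eq_iff matrix_matrix_mult_def sum_distrib_left algebra_simps)

lemma matrix_csmult_right: "C ** csmult c A = csmult c (C ** (A::'n::finite op))"
  by (simp add: vec_eq_iff matrix_matrix_mult_def sum_distrib_left algebra_simps)

lemma matrix_neg_left: "(- A) ** (C::'n::finite op) = - (A ** C)"
  by (simp add: vec_eq_iff matrix_matrix_mult_def sum_negf)

lemma matrix_neg_right: "(C::'n::finite op) ** (- A) = - (C ** A)"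
  by (simp add: vec_eq_iff matrix_matrix_mult_def sum_negf)

lemma matrix_sum_left: "(\<Sum>k<(m::nat). M k) ** B = (\<Sum>k<m. M k ** (B::'n::finite op))"
  by (induction m) (simp_all add: matrix_add_rdistrib)

lemma matrix_sum_right: "B ** (\<Sum>k<(m::nat). M k) = (\<Sum>k<m. B ** (M k::'n::finite op))"
  by (induction m) (simp_all add: matrix_add_ldistrib)

lemma csmult_add: "csmult c (A + B) = csmult c A + csmult c (B::'n::finite op)"
  by (simp add: vec_eq_iff algebra_simps)

lemma csmult_scaleR: "csmult c (r *\<^sub>R A) = r *\<^sub>R csmult c (A::'n::finite op)"
  by (simp add: vec_eq_iff scaleR_matrix_nth algebra_simps)

lemma trace_csmult: "trace (csmult c (A::'n::finite op)) = c * trace A"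
  by (simp add: trace_def sum_distrib_left)

lemma trace_scaleR: "trace (r *\<^sub>R (A::'n::finite op)) = of_real r * trace A"
  unfolding trace_def scaleR_matrix_nth by (simp add: sum_distrib_left)

lemma trace_neg: "trace (- (A::'n::finite op)) = - trace A"
  by (simp add: trace_def sum_negf)

lemma trace_zero [simp]: "trace (0::'n::finite op) = 0"
  by (simp add: trace_def)

lemma trace_sum: "trace (\<Sum>k<(m::nat). M k) = (\<Sum>k<m. trace (M k :: 'n::finite op))"
  by (induction m) (simp_all add: trace_add)

lemma linear_matrix_left:
  fixes A :: "'n::finite op"
  shows "linear (\<lambda>X::'n op. A ** X)"
  by (rule linearI) (simp_all add: matrix_add_ldistrib matrix_scaleR_right)

lemma linear_matrix_right:
  fixes A :: "'n::finite op"
  shows "linear (\<lambda>X::'n op. X ** A)"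
  by (rule linearI) (simp_all add: matrix_add_rdistrib matrix_scaleR_left)

lemma linear_csmult: "linear (\<lambda>X::'n::finite op. csmult c X)"
  by (rule linearI) (simp_all add: csmult_add csmult_scaleR)

lemma linear_madj: "linear (madj :: 'n::finite op \<Rightarrow> 'n op)"
  by (rule linearI) (simp_all add: madj_add madj_scaleR)

lemma linear_trace_left:
  fixes A :: "'n::finite op"
  shows "linear (\<lambda>X::'n op. trace (A ** X))"
proof (rule linearI)
  fix X Y :: "'n op" and r :: real
  show "trace (A ** (X + Y)) = trace (A ** X) + trace (A ** Y)"
    by (simp add: matrix_add_ldistrib trace_add)
  show "trace (A ** (r *\<^sub>R X)) = r *\<^sub>R trace (A ** X)"
    by (simp only: matrix_scaleR_right trace_scaleR) (simp add: scaleR_conv_of_real)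
qed

section \<open>Quadratic forms and positive semidefinite operators\<close>

definition cinner :: "complex^'n::finite \<Rightarrow> complex^'n \<Rightarrow> complex" where
  "cinner x y = (\<Sum>i\<in>UNIV. cnj (x $ i) * y $ i)"

definition qf :: "'n::finite op \<Rightarrow> complex^'n \<Rightarrow> complex" where
  "qf A x = cinner x (A *v x)"

lemma psd_iff_qf: "psd A \<longleftrightarrow> (\<forall>x. qf A x \<in> \<real> \<and> 0 \<le> Re (qf A x))"
  by (simp add: psd_def qf_def cinner_def)

lemma cinner_add_left: "cinner (x + y) z = cinner x z + cinner y z"
  by (simp add: cinner_def algebra_simps sum.distrib)

lemma cinner_add_right: "cinner x (y + z) = cinner x y + cinner x z"
  by (simp add: cinner_def algebra_simps sum.distrib)

lemma cinner_diff_right: "cinner x (y - z) = cinner x y - cinner x z"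
  by (simp add: cinner_def algebra_simps sum_subtractf)

lemma cinner_scale_left: "cinner (c *s x) y = cnj c * cinner x y"
  by (simp add: cinner_def sum_distrib_left algebra_simps)

lemma cinner_scale_right: "cinner x (c *s y) = c * cinner x y"
  by (simp add: cinner_def sum_distrib_left algebra_simps)

lemma cinner_zero_left [simp]: "cinner 0 x = 0"
  by (simp add: cinner_def)

lemma cinner_zero_right [simp]: "cinner x 0 = 0"
  by (simp add: cinner_def)

lemma cinner_commute: "cinner y x = cnj (cinner x y)"
  by (simp add: cinner_def mult.commute)

lemma inner_eq_Re_cinner: "x \<bullet> y = Re (cinner x y)"
  by (simp add: inner_vec_def inner_complex_def cinner_def)

lemma cinner_axis_left: "cinner (axis i 1) y = y $ i"
proof -
  have "cnj ((axis i 1) $ k) * y $ k = (if k = i then y $ i else 0)" for k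
    by (simp add: axis_def)
  then show ?thesis unfolding cinner_def by simp
qed

lemma cinner_madj: "cinner x (A *v y) = cinner (madj A *v x) y"
proof -
  have "cinner x (A *v y) = (\<Sum>i\<in>UNIV. \<Sum>j\<in>UNIV. cnj (x $ i) * A $ i $ j * y $ j)"
    by (simp add: cinner_def matrix_vector_mult_def sum_distrib_left mult.assoc)
  also have "\<dots> = (\<Sum>j\<in>UNIV. \<Sum>i\<in>UNIV. cnj (x $ i) * A $ i $ j * y $ j)"
    by (rule sum.swap)
  also have "\<dots> = cinner (madj A *v x) y"
    by (simp add: cinner_def matrix_vector_mult_def sum_distrib_left sum_distrib_right
        mult.commute mult.left_commute)
  finally show ?thesis .
qed

lemma cinner_self: "cinner x x = of_real ((norm x)^2)"
proof -
  have "cinner x x = (\<Sum>i\<in>UNIV. of_real ((norm (x $ i))^2))"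
    unfolding cinner_def using complex_norm_square by (simp add: mult.commute)
  also have "\<dots> = of_real ((norm x)^2)"
    by (simp add: norm_vec_def L2_set_def sum_nonneg)
  finally show ?thesis .
qed

lemma matrix_vector_mult_axis: "(A *v axis j 1) $ i = A $ i $ j"
proof -
  have "A $ i $ k * (axis j 1) $ k = (if k = j then A $ i $ j else 0)" for k
    by (simp add: axis_def)
  then show ?thesis unfolding matrix_vector_mult_def by simp
qed

lemma matrix_vector_mult_scale: "A *v (c *s y) = c *s (A *v (y::complex^'n::finite))"
  by (simp add: vec_eq_iff matrix_vector_mult_def sum_distrib_left algebra_simps)

lemma qf_add: "qf (A + B) x = qf A x + qf B x"
  by (simp add: qf_def matrix_vector_mult_add_rdistrib cinner_add_right)

lemma qf_diff: "qf (A - B) x = qf A x - qf B x"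
  by (simp add: qf_def matrix_vector_mult_diff_rdistrib cinner_diff_right)

lemma qf_scaleR: "qf (r *\<^sub>R A) x = of_real r * qf A x"
  unfolding qf_def cinner_def matrix_vector_mult_def scaleR_matrix_nth
  by (simp add: sum_distrib_left algebra_simps)

lemma qf_csmult: "qf (csmult c A) x = c * qf A x"
  by (simp add: qf_def cinner_def matrix_vector_mult_def sum_distrib_left algebra_simps)

lemma qf_zero [simp]: "qf 0 x = 0"
  by (simp add: qf_def)

lemma qf_sum: "qf (\<Sum>k<(K::nat). f k) x = (\<Sum>k<K. qf (f k) x)"
  by (induction K) (simp_all add: qf_add)

lemma qf_mat1: "qf (mat 1) x = of_real ((norm x)^2)"
  by (simp add: qf_def cinner_self)

lemma qf_axis: "qf A (axis i 1) = A $ i $ i"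
  by (simp add: qf_def cinner_axis_left matrix_vector_mult_axis)

lemma qf_sandwich: "qf (madj X ** A ** X) x = qf A (X *v x)"
  by (simp add: qf_def cinner_madj matrix_vector_mul_assoc[symmetric]
      matrix_mul_assoc[symmetric])

lemma qf_add_scale:
  "qf A (x + c *s y) = qf A x + c * cinner x (A *v y) + cnj c * cinner y (A *v x)
     + c * cnj c * qf A y"
  unfolding qf_def matrix_vector_right_distrib matrix_vector_mult_scale cinner_add_left
    cinner_add_right cinner_scale_left cinner_scale_right
  by (simp add: algebra_simps)

lemma qf_scale: "qf A (c *s x) = (c * cnj c) * qf A x"
  using qf_add_scale[of A 0 c x] by (simp add: qf_def)

lemma continuous_qf: "isCont (\<lambda>p. qf (fst p) (snd p)) (p :: ('n::finite op) \<times> (complex^'n))"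
  unfolding qf_def cinner_def matrix_vector_mult_def by (simp add: continuous_intros)

lemma cinner_conj_of_real_qf:
  assumes "\<forall>x. qf A x \<in> \<real>"
  shows "cinner y (A *v x) = cnj (cinner x (A *v y))"
proof -
  define p where "p = cinner x (A *v y)"
  define q where "q = cinner y (A *v x)"
  have im: "Im (qf A z) = 0" for z
    using assms complex_is_Real_iff by blast
  have "qf A (x + 1 *s y) = qf A x + p + q + qf A y"
    using qf_add_scale[of A x 1 y] by (simp add: p_def q_def)
  then have "Im p + Im q = 0"
    using im[of x] im[of y] im[of "x + 1 *s y"] by simp
  moreover have "qf A (x + \<i> *s y) = qf A x + \<i> * p - \<i> * q + qf A y"
    using qf_add_scale[of A x \<i> y] by (simp add: p_def q_def)
  then have "Re p - Re q = 0"
    using im[of x] im[of y] im[of "x + \<i> *s y"] by simp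
  ultimately have "q = cnj p" by (simp add: complex_eq_iff)
  then show ?thesis by (simp add: p_def q_def)
qed

lemma self_adjoint_of_real_qf:
  assumes "\<forall>x. qf A x \<in> \<real>"
  shows "self_adjoint A"
proof -
  have entry: "A $ i $ j = cnj (A $ j $ i)" for i j
    using cinner_conj_of_real_qf[OF assms, of "axis i 1" "axis j 1"]
    by (simp add: cinner_axis_left matrix_vector_mult_axis)
  have "madj A $ i $ j = A $ i $ j" for i j
    using entry[of i j] by simp
  then show ?thesis by (simp add: self_adjoint_def vec_eq_iff)
qed

lemma psd_self_adjoint: "psd A \<Longrightarrow> self_adjoint A"
  using self_adjoint_of_real_qf psd_iff_qf by blast

lemma self_adjoint_cinner_commute:
  "self_adjoint A \<Longrightarrow> cinner y (A *v x) = cnj (cinner x (A *v y))"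
  by (metis self_adjoint_def cinner_madj cinner_commute)

lemma self_adjoint_qf_real: "self_adjoint A \<Longrightarrow> qf A x \<in> \<real>"
  using self_adjoint_cinner_commute[of A x x] by (simp add: qf_def Reals_cnj_iff)

lemma psd_qf_eq_Re: "psd A \<Longrightarrow> qf A x = of_real (Re (qf A x))"
  using psd_iff_qf by (metis Reals_cases Re_complex_of_real)

lemma psd_add: "psd A \<Longrightarrow> psd B \<Longrightarrow> psd (A + B)"
  by (auto simp: psd_iff_qf qf_add)

lemma psd_scaleR: "psd A \<Longrightarrow> 0 \<le> c \<Longrightarrow> psd (c *\<^sub>R A)"
  by (auto simp: psd_iff_qf qf_scaleR)

lemma psd_sum: "(\<And>l. l < N \<Longrightarrow> psd (f l)) \<Longrightarrow> psd (\<Sum>l<(N::nat). f l)"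
  proof (induction N)
  case 0
  then show ?case by (simp add: psd_iff_qf)
next
  case (Suc N)
  then show ?case by (simp add: psd_add)
qed

lemma psd_sandwich: "psd A \<Longrightarrow> psd (madj X ** A ** X)"
  by (auto simp: psd_iff_qf qf_sandwich)

lemma psd_of_unit_vectors:
  fixes A :: "'n::finite op"
  assumes "self_adjoint A" and "\<And>u. norm u = 1 \<Longrightarrow> 0 \<le> Re (qf A u)"
  shows "psd A"
  unfolding psd_iff_qf
proof
  fix x :: "complex^'n"
  have "0 \<le> Re (qf A x)"
  proof (cases "x = 0")
    case True
    then show ?thesis by (simp add: qf_def)
  next
    case False
    define c where "c = complex_of_real (1 / norm x)"
    have "(c *s x) $ i = ((1 / norm x) *\<^sub>R x) $ i" for i
    proof -
      have "((1 / norm x) *\<^sub>R x) $ i = (1 / norm x) *\<^sub>R (x $ i)" by simp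
      also have "\<dots> = c * x $ i" by (simp add: c_def scaleR_conv_of_real)
      finally show ?thesis by simp
    qed
    then have "c *s x = (1 / norm x) *\<^sub>R x" by (simp add: vec_eq_iff)
    then have "norm (c *s x) = 1" using False by simp
    moreover have "qf A (c *s x) = of_real ((1 / norm x)^2) * qf A x"
      by (simp add: qf_scale c_def power2_eq_square)
    ultimately have "0 \<le> (1 / norm x)^2 * Re (qf A x)"
      using assms(2)[of "c *s x"] by simp
    then show ?thesis using False by (simp add: zero_le_mult_iff)
  qed
  then show "qf A x \<in> \<real> \<and> 0 \<le> Re (qf A x)"
    using self_adjoint_qf_real[OF assms(1)] by simp
qed

lemma nonneg_quadratic_imp_le:
  fixes a b c :: real
  assumes "0 \<le> b" "0 \<le> c" and nonneg: "\<And>t. 0 \<le> a - 2 * t * b + t^2 * b * c"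
  shows "b \<le> a * c"
proof (cases "c > 0")
  case True
  have "0 \<le> a - 2 * (1/c) * b + (1/c)^2 * b * c" by (rule nonneg)
  then have "b / c \<le> a" using True by (simp add: power2_eq_square field_simps)
  then show ?thesis using True by (simp add: divide_le_eq mult.commute)
next
  case False
  then have "c = 0" using assms(2) by simp
  show ?thesis
  proof (rule ccontr)
    assume "\<not> b \<le> a * c"
    then have "b > 0" using \<open>c = 0\<close> by simp
    have "0 \<le> a - 2 * ((a + 1) / (2 * b)) * b + ((a + 1) / (2 * b))^2 * b * c"
      by (rule nonneg)
    then show False using \<open>b > 0\<close> \<open>c = 0\<close> by simp
  qed
qed

lemma psd_cauchy_schwarz:
  assumes "psd A"
  shows "(cmod (cinner x (A *v y)))^2 \<le> Re (qf A x) * Re (qf A y)"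
proof (rule nonneg_quadratic_imp_le)
  define b where "b = cinner x (A *v y)"
  have cnj_b: "cinner y (A *v x) = cnj b"
    unfolding b_def by (rule self_adjoint_cinner_commute[OF psd_self_adjoint[OF assms]])
  have norm_b: "cnj b * b = of_real ((cmod b)^2)" "b * cnj b = of_real ((cmod b)^2)"
    using complex_norm_square[of b] by (simp_all add: mult.commute)
  fix t :: real
  define d where "d = - of_real t * cnj b"
  have d1: "d * b = - of_real (t * (cmod b)^2)" and d2: "cnj d * cnj b = - of_real (t * (cmod b)^2)"
    and d3: "d * cnj d = of_real (t^2 * (cmod b)^2)"
    unfolding d_def using norm_b by (simp_all add: power2_eq_square mult.assoc mult.left_commute)
  have "qf A (x + d *s y) = qf A x + d * b + cnj d * cnj b + d * cnj d * qf A y"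
    using qf_add_scale[of A x d y] by (simp only: cnj_b b_def[symmetric])
  also have "\<dots> = qf A x - of_real (2 * t * (cmod b)^2) + of_real (t^2 * (cmod b)^2) * qf A y"
    unfolding d1 d2 d3 by simp
  finally have "Re (qf A (x + d *s y))
      = Re (qf A x) - 2 * t * (cmod b)^2 + t^2 * (cmod b)^2 * Re (qf A y)"
    by simp
  moreover have "0 \<le> Re (qf A (x + d *s y))" using assms psd_iff_qf by blast
  ultimately show "0 \<le> Re (qf A x) - 2 * t * (cmod (cinner x (A *v y)))^2
      + t^2 * (cmod (cinner x (A *v y)))^2 * Re (qf A y)"
    by (simp add: b_def)
qed (use assms in \<open>auto simp: psd_iff_qf\<close>)

lemma psd_kernel:
  assumes "psd A" and "Re (qf A x) = 0"
  shows "A *v x = 0"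
proof -
  have "(cmod (cinner (A *v x) (A *v x)))^2 \<le> Re (qf A (A *v x)) * Re (qf A x)"
    by (rule psd_cauchy_schwarz[OF assms(1)])
  then have "cinner (A *v x) (A *v x) = 0" using assms(2) by simp
  then show ?thesis by (simp add: cinner_self)
qed

lemma psd_diagonal:
  assumes "psd A"
  shows "A $ i $ i = of_real (Re (A $ i $ i)) \<and> 0 \<le> Re (A $ i $ i)"
proof -
  have "0 \<le> Re (qf A (axis i 1))" using assms psd_iff_qf by blast
  then show ?thesis using psd_qf_eq_Re[OF assms, of "axis i 1"] by (simp add: qf_axis)
qed

lemma psd_entry_bound:
  "psd A \<Longrightarrow> (cmod (A $ i $ j))^2 \<le> Re (A $ i $ i) * Re (A $ j $ j)"
  using psd_cauchy_schwarz[of A "axis i 1" "axis j 1"]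
  by (simp add: cinner_axis_left matrix_vector_mult_axis qf_axis)

lemma psd_zero_diagonal:
  assumes "psd A" "A $ i $ i = 0"
  shows "A $ j $ i = 0" "A $ i $ j = 0"
proof -
  have "A *v axis i 1 = 0"
    using assms by (intro psd_kernel) (simp_all add: qf_axis)
  then show "A $ j $ i = 0" by (metis matrix_vector_mult_axis zero_index)
  then show "A $ i $ j = 0"
    using self_adjoint_entry[OF psd_self_adjoint[OF assms(1)], of j i] by simp
qed

section \<open>Rank-one decomposition and traces of products\<close>

definition outer :: "complex^'n::finite \<Rightarrow> complex^'n \<Rightarrow> 'n op" where
  "outer u v = (\<chi> i j. u $ i * cnj (v $ j))"

lemma outer_zero_left [simp]: "outer 0 v = 0"
  by (simp add: vec_eq_iff outer_def)

lemma outer_matrix_vector_mult: "outer u v *v x = cinner v x *s u"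
  by (simp add: vec_eq_iff outer_def matrix_vector_mult_def cinner_def sum_distrib_left
      algebra_simps)

lemma matrix_mult_outer: "B ** outer u v = outer (B *v u) v"
  by (simp add: vec_eq_iff outer_def matrix_vector_mult_def matrix_matrix_mult_def
      sum_distrib_right mult.assoc)

lemma qf_outer: "qf (outer u u) x = of_real ((cmod (cinner u x))^2)"
proof -
  have "qf (outer u u) x = cinner u x * cnj (cinner u x)"
    by (simp add: qf_def outer_matrix_vector_mult cinner_scale_right cinner_commute[of x u])
  then show ?thesis using complex_norm_square[of "cinner u x"] by simp
qed

lemma trace_matrix_mult_outer: "trace (B ** outer u u) = qf B u"
  unfolding matrix_mult_outer
  by (simp add: trace_def outer_def qf_def cinner_def mult.commute)

lemma psd_diff_outer_column:
  fixes A :: "'n::finite op"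
  assumes psdA: "psd A" and s: "A $ j $ j = of_real s" "s > 0"
  defines "u \<equiv> \<chi> i. A $ i $ j / of_real (sqrt s)"
  shows "psd (A - outer u u)"
    and "(A - outer u u) $ i $ i = A $ i $ i - of_real ((cmod (A $ i $ j))^2 / s)"
proof -
  show "psd (A - outer u u)"
    unfolding psd_iff_qf
  proof
    fix x
    have "cinner u x = (\<Sum>i\<in>UNIV. cnj (A $ i $ j) * x $ i) / of_real (sqrt s)"
      by (simp add: cinner_def u_def sum_divide_distrib)
    also have "\<dots> = (A *v x) $ j / of_real (sqrt s)"
      by (simp add: matrix_vector_mult_def self_adjoint_entry[OF psd_self_adjoint[OF psdA]])
    finally have "(cmod (cinner u x))^2 = (cmod ((A *v x) $ j))^2 / s"
      using s by (simp add: norm_divide power_divide)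
    also have "\<dots> \<le> Re (qf A x)"
      using psd_cauchy_schwarz[OF psdA, of "axis j 1" x] s
      by (simp add: cinner_axis_left qf_axis divide_le_eq mult.commute)
    finally have "(cmod (cinner u x))^2 \<le> Re (qf A x)" .
    moreover have "qf (A - outer u u) x = qf A x - of_real ((cmod (cinner u x))^2)"
      by (simp add: qf_diff qf_outer)
    moreover have "qf A x \<in> \<real>" using psdA psd_iff_qf by blast
    ultimately show "qf (A - outer u u) x \<in> \<real> \<and> 0 \<le> Re (qf (A - outer u u) x)"
      by auto
  qed
  have "(cmod (u $ i))^2 = (cmod (A $ i $ j))^2 / s"
    using s by (simp add: u_def norm_divide power_divide)
  then have "u $ i * cnj (u $ i) = of_real ((cmod (A $ i $ j))^2 / s)"
    using complex_norm_square[of "u $ i"] by simp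
  then show "(A - outer u u) $ i $ i = A $ i $ i - of_real ((cmod (A $ i $ j))^2 / s)"
    by (simp add: outer_def)
qed

lemma psd_cholesky_step:
  assumes psd: "psd A" and j: "A $ j $ j \<noteq> 0"
  obtains u where "psd (A - outer u u)"
    and "card {i. (A - outer u u) $ i $ i \<noteq> 0} < card {i. A $ i $ i \<noteq> 0}"
proof -
  define s where "s = Re (A $ j $ j)"
  have s: "A $ j $ j = of_real s" "s > 0"
    using psd_diagonal[OF psd, of j] j by (auto simp: s_def less_le)
  define u where "u = (\<chi> i. A $ i $ j / of_real (sqrt s))"
  note A' = psd_diff_outer_column[OF psd s, folded u_def]
  have "(A - outer u u) $ j $ j = 0"
    using A'(2)[of j] s by (simp add: power2_eq_square)
  moreover have "(A - outer u u) $ i $ i = 0" if "A $ i $ i = 0" for i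
    using A'(2)[of i] that psd_zero_diagonal(2)[OF psd that] by simp
  ultimately have "{i. (A - outer u u) $ i $ i \<noteq> 0} \<subseteq> {i. A $ i $ i \<noteq> 0} - {j}"
    by blast
  then have "card {i. (A - outer u u) $ i $ i \<noteq> 0} \<le> card ({i. A $ i $ i \<noteq> 0} - {j})"
    by (simp add: card_mono)
  also have "\<dots> < card {i. A $ i $ i \<noteq> 0}"
    using j by (intro card_Diff1_less) auto
  finally show ?thesis using A'(1) that by blast
qed

lemma psd_sum_outer:
  fixes A :: "'n::finite op"
  assumes "psd A"
  shows "\<exists>(m::nat) f. A = (\<Sum>k<m. outer (f k) (f k))"
  using assms
proof (induction "card {i. A $ i $ i \<noteq> 0}" arbitrary: A rule: less_induct)
  case less
  show ?case
  proof (cases "\<exists>j. A $ j $ j \<noteq> 0")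
    case False
    then have "A $ i $ j = 0" for i j
      using psd_zero_diagonal(2)[OF less.prems] by blast
    then have "A = 0" by (simp add: vec_eq_iff)
    then show ?thesis by (intro exI[of _ 0]) simp
  next
    case True
    then obtain u where u: "psd (A - outer u u)"
      "card {i. (A - outer u u) $ i $ i \<noteq> 0} < card {i. A $ i $ i \<noteq> 0}"
      using psd_cholesky_step[OF less.prems] by blast
    then obtain m :: nat and f where f: "A - outer u u = (\<Sum>k<m. outer (f k) (f k))"
      using less.hyps by blast
    have "(\<Sum>k<Suc m. outer ((f(m := u)) k) ((f(m := u)) k))
        = (\<Sum>k<m. outer (f k) (f k)) + outer u u"
      by simp
    also have "\<dots> = A"
      using f by (metis diff_add_cancel)
    finally show ?thesis by metis
  qed
qed

lemma trace_psd_matrix_mult: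
  assumes "psd B" "psd A"
  shows "trace (B ** A) = of_real (Re (trace (B ** A)))" and "0 \<le> Re (trace (B ** A))"
proof -
  obtain m :: nat and f where A: "A = (\<Sum>k<m. outer (f k) (f k))"
    using psd_sum_outer[OF assms(2)] by blast
  have "trace (B ** A) = (\<Sum>k<m. qf B (f k))"
    by (simp add: A matrix_sum_right trace_sum trace_matrix_mult_outer)
  also have "\<dots> = (\<Sum>k<m. of_real (Re (qf B (f k))))"
    using psd_qf_eq_Re[OF assms(1)] by (intro sum.cong) blast+
  also have "\<dots> = of_real (\<Sum>k<m. Re (qf B (f k)))"
    by simp
  finally have tr: "trace (B ** A) = of_real (\<Sum>k<m. Re (qf B (f k)))" .
  then show "trace (B ** A) = of_real (Re (trace (B ** A)))" by simp
  show "0 \<le> Re (trace (B ** A))"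
    using assms(1) by (simp add: tr psd_iff_qf sum_nonneg)
qed

lemma trace_psd_matrix_mult_eq_0:
  assumes "psd B" "psd A" "trace (B ** A) = 0"
  shows "B ** A = 0"
proof -
  obtain m :: nat and f where A: "A = (\<Sum>k<m. outer (f k) (f k))"
    using psd_sum_outer[OF assms(2)] by blast
  have "(\<Sum>k<m. qf B (f k)) = 0"
    using assms(3) by (simp add: A matrix_sum_right trace_sum trace_matrix_mult_outer)
  then have "(\<Sum>k<m. Re (qf B (f k))) = 0"
    by (simp flip: Re_sum)
  moreover have "\<forall>k\<in>{..<m}. 0 \<le> Re (qf B (f k))" using assms(1) psd_iff_qf by blast
  ultimately have "\<forall>k\<in>{..<m}. Re (qf B (f k)) = 0"
    using sum_nonneg_eq_0_iff[of "{..<m}" "\<lambda>k. Re (qf B (f k))"] by blast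
  then have "\<forall>k\<in>{..<m}. B *v f k = 0"
    using psd_kernel[OF assms(1)] by blast
  then show ?thesis by (simp add: A matrix_sum_right matrix_mult_outer)
qed

section \<open>Density states and expectation values\<close>

definition entrywise_norm :: "'n::finite op \<Rightarrow> real" where
  "entrywise_norm M = (\<Sum>i\<in>UNIV. \<Sum>j\<in>UNIV. cmod (M $ i $ j))"

definition expval :: "'n::finite op \<Rightarrow> 'n op \<Rightarrow> real" where
  "expval X \<sigma> = Re (trace (X ** \<sigma>))"

lemma entrywise_norm_nonneg: "0 \<le> entrywise_norm M"
  by (simp add: entrywise_norm_def sum_nonneg)

lemma density_state_entry_le_1:
  assumes "density_state \<sigma>"
  shows "cmod (\<sigma> $ i $ j) \<le> 1"
proof -
  have psd: "psd \<sigma>" and tr: "trace \<sigma> = 1" using assms by (auto simp: density_state_def)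
  have diag_nonneg: "0 \<le> Re (\<sigma> $ k $ k)" for k using psd_diagonal[OF psd] by blast
  have "(\<Sum>k\<in>UNIV. Re (\<sigma> $ k $ k)) = Re (trace \<sigma>)" by (simp add: trace_def)
  then have "(\<Sum>k\<in>UNIV. Re (\<sigma> $ k $ k)) = 1" using tr by simp
  then have diag_le: "Re (\<sigma> $ k $ k) \<le> 1" for k
    using member_le_sum[of k UNIV "\<lambda>k. Re (\<sigma> $ k $ k)"] diag_nonneg by simp
  have "(cmod (\<sigma> $ i $ j))^2 \<le> Re (\<sigma> $ i $ i) * Re (\<sigma> $ j $ j)"
    by (rule psd_entry_bound[OF psd])
  also have "\<dots> \<le> 1 * 1" using diag_nonneg diag_le by (intro mult_mono) auto
  finally show ?thesis by (simp add: power_le_one_iff abs_square_le_1)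
qed

lemma cmod_trace_mult_density_le:
  assumes "density_state \<sigma>"
  shows "cmod (trace (M ** \<sigma>)) \<le> entrywise_norm M"
proof -
  have "cmod (trace (M ** \<sigma>)) = cmod (\<Sum>i\<in>UNIV. \<Sum>j\<in>UNIV. M $ i $ j * \<sigma> $ j $ i)"
    by (simp add: trace_def matrix_matrix_mult_def)
  also have "\<dots> \<le> (\<Sum>i\<in>UNIV. \<Sum>j\<in>UNIV. cmod (M $ i $ j * \<sigma> $ j $ i))"
    by (rule order_trans[OF norm_sum sum_mono[OF norm_sum]])
  also have "\<dots> \<le> entrywise_norm M"
    unfolding entrywise_norm_def using density_state_entry_le_1[OF assms]
    by (intro sum_mono) (simp add: norm_mult mult_left_le)
  finally show ?thesis .
qed

lemma cmod_qf_le: "cmod (qf M x) \<le> entrywise_norm M * (norm x)^2"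
proof -
  have "cmod (qf M x) = cmod (\<Sum>i\<in>UNIV. \<Sum>j\<in>UNIV. cnj (x $ i) * M $ i $ j * x $ j)"
    by (simp add: qf_def cinner_def matrix_vector_mult_def sum_distrib_left mult.assoc)
  also have "\<dots> \<le> (\<Sum>i\<in>UNIV. \<Sum>j\<in>UNIV. cmod (cnj (x $ i) * M $ i $ j * x $ j))"
    by (rule order_trans[OF norm_sum sum_mono[OF norm_sum]])
  also have "\<dots> \<le> (\<Sum>i\<in>UNIV. \<Sum>j\<in>UNIV. cmod (M $ i $ j) * (norm x)^2)"
  proof (intro sum_mono)
    fix i j
    have "cmod (cnj (x $ i) * M $ i $ j * x $ j) = cmod (M $ i $ j) * (cmod (x $ i) * cmod (x $ j))"
      by (simp add: norm_mult)
    also have "\<dots> \<le> cmod (M $ i $ j) * (norm x * norm x)"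
      by (intro mult_left_mono mult_mono Finite_Cartesian_Product.norm_nth_le) auto
    finally show "cmod (cnj (x $ i) * M $ i $ j * x $ j) \<le> cmod (M $ i $ j) * (norm x)^2"
      by (simp add: power2_eq_square)
  qed
  also have "\<dots> = entrywise_norm M * (norm x)^2"
    by (simp add: entrywise_norm_def sum_distrib_right)
  finally show ?thesis .
qed

lemma expval_add: "expval (A + B) \<sigma> = expval A \<sigma> + expval B \<sigma>"
  by (simp add: expval_def matrix_add_rdistrib trace_add)

lemma expval_diff: "expval (A - B) \<sigma> = expval A \<sigma> - expval B \<sigma>"
  by (simp add: expval_def matrix_diff_rdistrib trace_sub)

lemma expval_scaleR: "expval (c *\<^sub>R A) \<sigma> = c * expval A \<sigma>"
  by (simp add: expval_def matrix_scaleR_left trace_scaleR)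

lemma expval_neg: "expval (- A) \<sigma> = - expval A \<sigma>"
  by (simp add: expval_def matrix_neg_left trace_neg)

lemma expval_zero [simp]: "expval 0 \<sigma> = 0"
  by (simp add: expval_def trace_def)

lemma expval_nonneg: "psd X \<Longrightarrow> psd \<sigma> \<Longrightarrow> 0 \<le> expval X \<sigma>"
  unfolding expval_def by (rule trace_psd_matrix_mult(2))

lemma trace_eq_expval: "psd X \<Longrightarrow> psd \<sigma> \<Longrightarrow> trace (X ** \<sigma>) = of_real (expval X \<sigma>)"
  unfolding expval_def by (rule trace_psd_matrix_mult(1))

lemma expval_mono: "loewner_le A B \<Longrightarrow> psd \<sigma> \<Longrightarrow> expval A \<sigma> \<le> expval B \<sigma>"
  using expval_nonneg[of "B - A" \<sigma>] by (simp add: loewner_le_def expval_diff)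

lemma abs_expval_le: "density_state \<sigma> \<Longrightarrow> \<bar>expval X \<sigma>\<bar> \<le> entrywise_norm X"
  using cmod_trace_mult_density_le abs_Re_le_cmod order_trans unfolding expval_def by blast

lemma expval_sum: "expval (\<Sum>l<(N::nat). W l) \<sigma> = (\<Sum>l<N. expval (W l) \<sigma>)"
  by (simp add: expval_def matrix_sum_left trace_sum)

lemma closed_psd: "closed {A::'n::finite op. psd A}"
proof -
  have "closed {A::'n op. Im (qf A x) = 0 \<and> 0 \<le> Re (qf A x)}" for x
    unfolding qf_def cinner_def matrix_vector_mult_def
    by (intro closed_Collect_conj closed_Collect_eq closed_Collect_le continuous_intros)
  then have "closed (\<Inter>x. {A::'n op. Im (qf A x) = 0 \<and> 0 \<le> Re (qf A x)})" by blast
  moreover have "{A::'n op. psd A} = (\<Inter>x. {A. Im (qf A x) = 0 \<and> 0 \<le> Re (qf A x)})"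
    by (auto simp: psd_iff_qf complex_is_Real_iff)
  ultimately show ?thesis by simp
qed

lemma closed_density_states: "closed {\<sigma>::'n::finite op. density_state \<sigma>}"
proof -
  have "closed {\<sigma>::'n op. trace \<sigma> = 1}"
    unfolding trace_def by (intro closed_Collect_eq continuous_intros)
  then show ?thesis
    using closed_Int[OF closed_psd] by (simp add: density_state_def Collect_conj_eq)
qed

lemma norm_density_state_le:
  assumes "density_state (\<sigma>::'n::finite op)"
  shows "norm \<sigma> \<le> real CARD('n) * real CARD('n)"
proof -
  have norm_le: "norm (v::'a::real_normed_vector^'n) \<le> (\<Sum>i\<in>UNIV. norm (v $ i))" for v
    unfolding norm_vec_def by (rule L2_set_le_sum) simp
  have "norm \<sigma> \<le> (\<Sum>i\<in>UNIV. norm (\<sigma> $ i))" by (rule norm_le)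
  also have "\<dots> \<le> (\<Sum>i\<in>UNIV. \<Sum>j\<in>UNIV. norm (\<sigma> $ i $ j))"
    by (intro sum_mono norm_le)
  also have "\<dots> \<le> (\<Sum>i\<in>(UNIV::'n set). \<Sum>j\<in>(UNIV::'n set). 1)"
    using density_state_entry_le_1[OF assms] by (intro sum_mono) auto
  finally show ?thesis by simp
qed

section \<open>The Lindblad generator\<close>

lemma linear_dissipator_term:
  fixes A B C D :: "'n::finite op"
  shows "linear (\<lambda>X. A ** X ** B - csmult (1/2) (C ** D ** X) - csmult (1/2) (X ** C ** D))"
proof -
  have "linear (\<lambda>X. A ** X ** B)"
    using linear_compose[OF linear_matrix_left[of A] linear_matrix_right[of B]]
    by (simp add: o_def)
  moreover have "linear (\<lambda>X. csmult (1/2) (C ** D ** X))"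
    using linear_compose[OF linear_matrix_left linear_csmult] by (simp add: o_def)
  moreover have "linear (\<lambda>X. csmult (1/2) (X ** C ** D))"
    using linear_compose[OF linear_matrix_right[of "C ** D"] linear_csmult]
    by (simp add: o_def matrix_mul_assoc)
  ultimately show ?thesis by (intro linear_compose_sub)
qed

lemma linear_gen: "linear (gen K L)"
  unfolding gen_def[abs_def] by (intro linear_compose_sum ballI linear_dissipator_term)

lemma linear_lindblad: "linear (lindblad H K L)"
proof -
  have "linear (\<lambda>\<rho>. csmult (- \<i>) (H ** \<rho> - \<rho> ** H))"
    using linear_compose[OF linear_compose_sub[OF linear_matrix_left linear_matrix_right]
        linear_csmult]
    by (simp add: o_def)
  then show ?thesis
    unfolding lindblad_def[abs_def]
    by (intro linear_compose_add linear_compose_sum ballI linear_dissipator_term)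
qed

lemma trace_dissipator_term_dual:
  fixes X \<rho> L :: "'n::finite op"
  shows "trace (X ** (L ** \<rho> ** madj L - csmult (1/2) (madj L ** L ** \<rho>)
                       - csmult (1/2) (\<rho> ** madj L ** L)))
       = trace ((madj L ** X ** L - csmult (1/2) (madj L ** L ** X)
                 - csmult (1/2) (X ** madj L ** L)) ** \<rho>)"
proof -
  have "trace (X ** (L ** \<rho> ** madj L)) = trace (madj L ** (X ** L ** \<rho>))"
    by (metis matrix_mul_assoc trace_mul_sym)
  moreover have "trace (X ** (\<rho> ** madj L ** L)) = trace ((madj L ** L) ** (X ** \<rho>))"
    by (metis matrix_mul_assoc trace_mul_sym)
  ultimately show ?thesis
    by (simp add: matrix_diff_ldistrib matrix_diff_rdistrib matrix_csmult_left
        matrix_csmult_right trace_sub trace_csmult matrix_mul_assoc)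
qed

text \<open>Heisenberg-picture duality; the Hamiltonian part drops out because X commutes with H.\<close>

lemma trace_lindblad_dual:
  assumes comm: "X ** H = H ** X"
  shows "trace (X ** lindblad H K L \<rho>) = trace (gen K L X ** \<rho>)"
proof -
  have "trace (X ** (\<rho> ** H)) = trace (X ** (H ** \<rho>))"
    by (metis comm matrix_mul_assoc trace_mul_sym)
  then have "trace (X ** csmult (- \<i>) (H ** \<rho> - \<rho> ** H)) = 0"
    by (simp add: matrix_csmult_right matrix_diff_ldistrib trace_csmult trace_sub)
  then show ?thesis
    unfolding lindblad_def gen_def
    by (simp add: matrix_add_ldistrib trace_add matrix_sum_right matrix_sum_left trace_sum
        trace_dissipator_term_dual)
qed

lemma trace_lindblad_eq_0: "trace (lindblad H K L \<rho>) = 0"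
proof -
  have "gen K L (mat 1) = 0" by (simp add: gen_def vec_eq_iff)
  then show ?thesis using trace_lindblad_dual[of "mat 1" H K L \<rho>] by (simp add: trace_def)
qed

lemma madj_lindblad:
  assumes "self_adjoint H"
  shows "madj (lindblad H K L \<rho>) = lindblad H K L (madj \<rho>)"
proof -
  have H: "madj H = H" using assms by (simp add: self_adjoint_def)
  have "madj (csmult (- \<i>) (H ** \<rho> - \<rho> ** H)) = csmult (- \<i>) (H ** madj \<rho> - madj \<rho> ** H)"
    by (simp add: vec_eq_iff H madj_matrix_mult madj_csmult madj_diff algebra_simps)
  moreover have "madj (L k ** \<rho> ** madj (L k) - csmult (1/2) (madj (L k) ** L k ** \<rho>)
                  - csmult (1/2) (\<rho> ** madj (L k) ** L k))
      = L k ** madj \<rho> ** madj (L k) - csmult (1/2) (madj (L k) ** L k ** madj \<rho>)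
        - csmult (1/2) (madj \<rho> ** madj (L k) ** L k)" for k
    by (simp add: madj_diff madj_add madj_csmult madj_matrix_mult matrix_mul_assoc algebra_simps)
  ultimately show ?thesis
    unfolding lindblad_def by (simp add: madj_add madj_sum)
qed

lemma qf_lindblad_nonneg_on_kernel:
  assumes "psd \<sigma>" "\<sigma> *v x = 0"
  shows "0 \<le> Re (qf (lindblad H K L \<sigma>) x)"
proof -
  have sa: "self_adjoint \<sigma>" using psd_self_adjoint[OF assms(1)] .
  have left_zero: "qf (B ** \<sigma>) x = 0" for B
    using assms(2) by (simp add: qf_def matrix_vector_mul_assoc[symmetric])
  have right_zero: "qf (\<sigma> ** B) x = 0" for B
    using assms(2) sa by (simp add: qf_def cinner_madj self_adjoint_def
        matrix_vector_mul_assoc[symmetric])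
  have kernel_terms: "qf (madj (L k) ** L k ** \<sigma>) x = 0" "qf (\<sigma> ** madj (L k) ** L k) x = 0"
    for k
    using left_zero right_zero[of "madj (L k) ** L k"] by (simp_all add: matrix_mul_assoc)
  have "Re (qf (L k ** \<sigma> ** madj (L k)) x) \<ge> 0" for k
    using assms(1) qf_sandwich[of "madj (L k)" \<sigma> x] by (simp add: psd_iff_qf)
  then show ?thesis
    unfolding lindblad_def qf_add qf_sum
    by (simp add: qf_csmult qf_diff left_zero right_zero kernel_terms sum_nonneg)
qed

lemma loewner_le_gen_0_of_ES:
  assumes "psd X" "condition_ES K L X"
  shows "loewner_le (gen K L X) 0"
proof -
  obtain c where "0 < c" "loewner_le (gen K L X) (- (c *\<^sub>R X))"
    using assms(2) by (auto simp: condition_ES_def)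
  then have "psd ((- (c *\<^sub>R X) - gen K L X) + c *\<^sub>R X)"
    using assms(1) by (intro psd_add psd_scaleR) (auto simp: loewner_le_def)
  then show ?thesis by (simp add: loewner_le_def)
qed

lemma loewner_le_gen_sum_0:
  assumes "\<And>l. l < N \<Longrightarrow> loewner_le (gen K L (W l)) 0"
  shows "loewner_le (gen K L (\<Sum>l<(N::nat). W l)) 0"
proof -
  have "0 - gen K L (\<Sum>l<N. W l) = (\<Sum>l<N. 0 - gen K L (W l))"
    by (simp add: linear_sum[OF linear_gen] sum_negf)
  then show ?thesis
    using psd_sum[of N "\<lambda>l. 0 - gen K L (W l)"] assms by (simp add: loewner_le_def)
qed

text \<open>Completing the square: positivity of -G(X) sandwiched between \<delta>X - 1 and its
  adjoint bounds the cross terms in G(X X) = D(X) + G(X) X + X G(X).\<close>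

lemma expval_gen_square_ge:
  fixes X \<sigma> :: "'n::finite op"
  assumes sa: "self_adjoint X" and gen_nonpos: "loewner_le (gen K L X) 0"
    and \<delta>: "\<delta> > 0" and \<sigma>: "psd \<sigma>"
  shows "expval (dissip K L X) \<sigma> - \<delta> * expval (X ** (- gen K L X) ** X) \<sigma>
    \<le> expval (gen K L (X ** X)) \<sigma> - expval (gen K L X) \<sigma> / \<delta>"
proof -
  define g where "g = - gen K L X"
  define e where "e A = expval A \<sigma>" for A
  define Y where "Y = \<delta> *\<^sub>R X - mat 1"
  have "madj Y = Y"
    using sa by (simp add: Y_def madj_diff madj_scaleR self_adjoint_def)
  moreover have "Y ** g ** Y = (\<delta> * \<delta>) *\<^sub>R (X ** g ** X) - \<delta> *\<^sub>R (X ** g) - \<delta> *\<^sub>R (g ** X) + g"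
  proof -
    have "Y ** g = \<delta> *\<^sub>R (X ** g) - g"
      by (simp add: Y_def matrix_diff_rdistrib matrix_scaleR_left)
    then show ?thesis
      by (simp add: Y_def matrix_diff_rdistrib matrix_diff_ldistrib matrix_scaleR_left
          matrix_scaleR_right scaleR_diff_right algebra_simps)
  qed
  moreover have "psd g" using gen_nonpos by (simp add: loewner_le_def g_def)
  ultimately have "0 \<le> e ((\<delta> * \<delta>) *\<^sub>R (X ** g ** X) - \<delta> *\<^sub>R (X ** g) - \<delta> *\<^sub>R (g ** X) + g)"
    using expval_nonneg[OF psd_sandwich \<sigma>, of g Y] by (simp add: e_def)
  then have "\<delta> * (e (X ** g) + e (g ** X)) \<le> \<delta> * (\<delta> * e (X ** g ** X) + e g / \<delta>)"
    using \<delta> by (simp add: e_def expval_add expval_diff expval_scaleR algebra_simps)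
  then have cross: "e (X ** g) + e (g ** X) \<le> \<delta> * e (X ** g ** X) + e g / \<delta>"
    using \<delta> by (simp add: mult_le_cancel_left_pos)
  have "gen K L (X ** X) = dissip K L X + gen K L X ** X + X ** gen K L X"
    using sa by (simp add: dissip_def self_adjoint_def)
  then have "e (gen K L (X ** X)) = e (dissip K L X) - e (g ** X) - e (X ** g)"
    by (simp add: g_def e_def expval_add expval_neg matrix_neg_left matrix_neg_right)
  moreover have "e (gen K L X) = - e g"
    by (simp add: g_def e_def expval_neg)
  ultimately show ?thesis
    using cross by (simp add: e_def g_def)
qed

lemma expval_gen_square_ge_density_state:
  assumes "self_adjoint X" "loewner_le (gen K L X) 0" "0 < \<delta>" "density_state \<sigma>"
  shows "expval (dissip K L X) \<sigma> - \<delta> * entrywise_norm (X ** (- gen K L X) ** X)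
    \<le> expval (gen K L (X ** X)) \<sigma> - expval (gen K L X) \<sigma> / \<delta>"
proof -
  have "\<delta> * expval (X ** (- gen K L X) ** X) \<sigma> \<le> \<delta> * entrywise_norm (X ** (- gen K L X) ** X)"
    using abs_expval_le[OF assms(4)] \<open>0 < \<delta>\<close> by (simp add: abs_le_iff)
  then show ?thesis
    using expval_gen_square_ge[OF assms(1-3)] assms(4) by (force simp: density_state_def)
qed

section \<open>Differential inequalities on the half-line\<close>

lemma at_within_Ici_eq_at: "0 < (t::real) \<Longrightarrow> at t within {0..} = at t"
  by (rule at_within_interior) simp

lemma antitone_of_deriv_nonpos:
  fixes f f' :: "real \<Rightarrow> real"
  assumes der: "\<And>t. 0 \<le> t \<Longrightarrow> (f has_real_derivative f' t) (at t within {0..})"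
    and nonpos: "\<And>t. 0 < t \<Longrightarrow> f' t \<le> 0"
    and "0 \<le> a" "a \<le> b"
  shows "f b \<le> f a"
proof (rule DERIV_nonpos_imp_decreasing_open[OF \<open>a \<le> b\<close>])
  show "\<exists>y. (f has_real_derivative y) (at x) \<and> y \<le> 0" if "a < x" "x < b" for x
    using der[of x] nonpos[of x] that \<open>0 \<le> a\<close> by (auto simp: at_within_Ici_eq_at)
  have "continuous_on {0..} f" by (rule DERIV_continuous_on[OF der]) simp
  then show "continuous_on {a..b} f" by (rule continuous_on_subset) (use \<open>0 \<le> a\<close> in auto)
qed

lemma exp_decay_of_deriv_le:
  fixes f f' :: "real \<Rightarrow> real"
  assumes der: "\<And>t. 0 \<le> t \<Longrightarrow> (f has_real_derivative f' t) (at t within {0..})"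
    and decay: "\<And>t. 0 < t \<Longrightarrow> f' t \<le> - c * f t" and "0 \<le> t"
  shows "f t \<le> f 0 * exp (- c * t)"
proof -
  have "exp (c * t) * f t \<le> exp (c * 0) * f 0"
  proof (rule antitone_of_deriv_nonpos[where f = "\<lambda>t. exp (c * t) * f t"])
    show "((\<lambda>t. exp (c * t) * f t) has_real_derivative exp (c * s) * (f' s + c * f s))
        (at s within {0..})" if "0 \<le> s" for s
      using der[OF that] by (auto intro!: derivative_eq_intros simp: algebra_simps)
    show "exp (c * s) * (f' s + c * f s) \<le> 0" if "0 < s" for s
      using decay[OF that] by (simp add: mult_nonneg_nonpos)
  qed (use \<open>0 \<le> t\<close> in auto)
  then show ?thesis by (simp add: exp_minus field_simps)
qed

lemma linear_growth_of_deriv_ge: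
  fixes F F' :: "real \<Rightarrow> real"
  assumes der: "\<And>t. 0 \<le> t \<Longrightarrow> (F has_real_derivative F' t) (at t within {0..})"
    and growth: "\<And>t. 0 < t \<Longrightarrow> \<kappa> \<le> F' t" and "0 \<le> t"
  shows "F 0 + \<kappa> * t \<le> F t"
proof -
  have "\<kappa> * t - F t \<le> \<kappa> * 0 - F 0"
  proof (rule antitone_of_deriv_nonpos[where f = "\<lambda>t. \<kappa> * t - F t"])
    show "((\<lambda>t. \<kappa> * t - F t) has_real_derivative \<kappa> - F' s) (at s within {0..})"
      if "0 \<le> s" for s
      using der[OF that] by (auto intro!: derivative_eq_intros)
  qed (use growth \<open>0 \<le> t\<close> in auto)
  then show ?thesis by simp
qed

lemma unbounded_of_deriv_ge:
  fixes F F' :: "real \<Rightarrow> real"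
  assumes der: "\<And>t. 0 \<le> t \<Longrightarrow> (F has_real_derivative F' t) (at t within {0..})"
    and growth: "\<And>t. 0 < t \<Longrightarrow> \<kappa> \<le> F' t" and "0 < \<kappa>"
  obtains t where "0 \<le> t" "M < F t"
proof
  define T where "T = (\<bar>M\<bar> + \<bar>F 0\<bar> + 1) / \<kappa>"
  show "0 \<le> T" using \<open>0 < \<kappa>\<close> by (simp add: T_def)
  then have "F 0 + \<kappa> * T \<le> F T" using linear_growth_of_deriv_ge[OF der growth] by blast
  moreover have "\<kappa> * T = \<bar>M\<bar> + \<bar>F 0\<bar> + 1" using \<open>0 < \<kappa>\<close> by (simp add: T_def)
  ultimately show "M < F T" by linarith
qed

lemma antitone_nonneg_tendsto_0:
  fixes f :: "real \<Rightarrow> real"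
  assumes antitone: "\<And>a b. 0 \<le> a \<Longrightarrow> a \<le> b \<Longrightarrow> f b \<le> f a"
    and nonneg: "\<And>t. 0 \<le> t \<Longrightarrow> 0 \<le> f t"
    and small: "\<And>v. 0 < v \<Longrightarrow> \<exists>t\<ge>0. f t < v"
  shows "(f \<longlongrightarrow> 0) at_top"
proof (rule order_tendstoI)
  show "eventually (\<lambda>t. a < f t) at_top" if "a < 0" for a
    using nonneg that by (intro eventually_at_top_linorderI[of 0]) (auto intro: less_le_trans)
  show "eventually (\<lambda>t. f t < a) at_top" if a: "0 < a" for a
  proof -
    obtain t0 where "0 \<le> t0" "f t0 < a" using small[OF a] by blast
    then show ?thesis
      using antitone by (intro eventually_at_top_linorderI[of t0]) (auto intro: le_less_trans)
  qed
qed

lemma deriv_inner_self: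
  fixes A :: "real \<Rightarrow> 'a::real_inner"
  assumes "(A has_vector_derivative A') (at t within S)"
  shows "((\<lambda>t. A t \<bullet> A t) has_real_derivative 2 * (A t \<bullet> A')) (at t within S)"
proof -
  have d: "(A has_derivative (\<lambda>h. h *\<^sub>R A')) (at t within S)"
    using assms by (simp add: has_vector_derivative_def)
  have "((\<lambda>t. A t \<bullet> A t) has_derivative (\<lambda>h. A t \<bullet> (h *\<^sub>R A') + (h *\<^sub>R A') \<bullet> A t))
      (at t within S)"
    by (rule has_derivative_inner[OF d d])
  then show ?thesis unfolding has_field_derivative_def
    by (rule has_derivative_eq_rhs) (auto simp: fun_eq_iff inner_commute algebra_simps)
qed

lemma linear_ode_zero:
  fixes A :: "real \<Rightarrow> 'a::real_inner"
  assumes der: "\<And>t. 0 \<le> t \<Longrightarrow> (A has_vector_derivative T (A t)) (at t within {0..})"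
    and bl: "bounded_linear T" and "A 0 = 0" and "0 \<le> t"
  shows "A t = 0"
proof -
  obtain C where C: "0 < C" "\<And>x. norm (T x) \<le> norm x * C"
    using bounded_linear.pos_bounded[OF bl] by blast
  have bound: "A s \<bullet> T (A s) \<le> C * (A s \<bullet> A s)" for s
  proof -
    have "A s \<bullet> T (A s) \<le> norm (A s) * norm (T (A s))"
      by (rule order_trans[OF abs_ge_self Cauchy_Schwarz_ineq2])
    also have "\<dots> \<le> norm (A s) * (norm (A s) * C)" using C(2) by (intro mult_left_mono) auto
    finally show ?thesis by (simp add: power2_norm_eq_inner[symmetric] power2_eq_square mult_ac)
  qed
  have "A t \<bullet> A t \<le> (A 0 \<bullet> A 0) * exp (- (- 2 * C) * t)"
  proof (rule exp_decay_of_deriv_le[OF deriv_inner_self[OF der]])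
    show "2 * (A s \<bullet> T (A s)) \<le> - (- 2 * C) * (A s \<bullet> A s)" for s
      using bound[of s] by simp
  qed (use \<open>0 \<le> t\<close> in auto)
  then have "A t \<bullet> A t \<le> 0" using \<open>A 0 = 0\<close> by simp
  then show ?thesis by (metis inner_eq_zero_iff inner_ge_zero order_antisym)
qed

lemma first_nonpos_time:
  fixes \<phi> :: "real \<Rightarrow> 'a::metric_space \<Rightarrow> real"
  assumes "compact S" and cont: "continuous_on ({0..} \<times> S) (\<lambda>(t, x). \<phi> t x)"
    and "0 \<le> t0" "x0 \<in> S" "\<phi> t0 x0 \<le> 0"
  obtains ts x where "0 \<le> ts" "x \<in> S" "\<phi> ts x \<le> 0"
    and "\<And>t y. 0 \<le> t \<Longrightarrow> t < ts \<Longrightarrow> y \<in> S \<Longrightarrow> 0 < \<phi> t y"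
proof -
  define P where "P = {p \<in> {0..t0} \<times> S. \<phi> (fst p) (snd p) \<le> 0}"
  have "compact ({0..t0} \<times> S)" using \<open>compact S\<close> by (intro compact_Times compact_Icc)
  moreover have "continuous_on ({0..t0} \<times> S) (\<lambda>(t, x). \<phi> t x)"
    by (rule continuous_on_subset[OF cont]) auto
  ultimately have "closed P"
    unfolding P_def case_prod_beta
    by (intro continuous_on_closed_Collect_le continuous_on_const compact_imp_closed)
  then have "compact ({0..t0} \<times> S \<inter> P)"
    by (rule compact_Int_closed[OF \<open>compact ({0..t0} \<times> S)\<close>])
  then have "compact P" by (simp add: P_def Int_absorb1 subset_iff)
  moreover have "(t0, x0) \<in> P" using assms by (simp add: P_def)
  ultimately obtain p where p: "p \<in> P" "\<And>q. q \<in> P \<Longrightarrow> fst p \<le> fst q"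
    using continuous_attains_inf[of P fst] continuous_on_fst[OF continuous_on_id] by blast
  show ?thesis
  proof (rule that[of "fst p" "snd p"])
    show "0 \<le> fst p" "snd p \<in> S" "\<phi> (fst p) (snd p) \<le> 0" using p(1) by (auto simp: P_def)
    show "0 < \<phi> t y" if "0 \<le> t" "t < fst p" "y \<in> S" for t y
      using p(1) p(2)[of "(t, y)"] that by (force simp: P_def)
  qed
qed

lemma positive_of_barrier:
  fixes \<phi> \<phi>' :: "real \<Rightarrow> 'a::metric_space \<Rightarrow> real"
  assumes "compact S" and cont: "continuous_on ({0..} \<times> S) (\<lambda>(t, x). \<phi> t x)"
    and init: "\<And>x. x \<in> S \<Longrightarrow> 0 < \<phi> 0 x"
    and der: "\<And>t x. 0 < t \<Longrightarrow> x \<in> S \<Longrightarrow> ((\<lambda>s. \<phi> s x) has_real_derivative \<phi>' t x) (at t)"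
    and barrier: "\<And>t x. 0 < t \<Longrightarrow> x \<in> S \<Longrightarrow> \<forall>y\<in>S. 0 \<le> \<phi> t y \<Longrightarrow> \<phi> t x = 0 \<Longrightarrow> 0 < \<phi>' t x"
    and "0 \<le> t" "x \<in> S"
  shows "0 < \<phi> t x"
proof (rule ccontr)
  assume "\<not> 0 < \<phi> t x"
  then have "\<phi> t x \<le> 0" by simp
  obtain ts z where ts: "0 \<le> ts" "z \<in> S" "\<phi> ts z \<le> 0"
    and before: "\<And>t y. 0 \<le> t \<Longrightarrow> t < ts \<Longrightarrow> y \<in> S \<Longrightarrow> 0 < \<phi> t y"
    by (rule first_nonpos_time[OF \<open>compact S\<close> cont \<open>0 \<le> t\<close> \<open>x \<in> S\<close> \<open>\<phi> t x \<le> 0\<close>])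
      (rule that)
  have "ts \<noteq> 0" using init[OF ts(2)] ts(3) by auto
  then have "0 < ts" using ts(1) by simp
  have touch: "0 \<le> \<phi> ts y" if "y \<in> S" for y
  proof (rule tendsto_lowerbound)
    show "((\<lambda>s. \<phi> s y) \<longlongrightarrow> \<phi> ts y) (at_left ts)"
      using DERIV_isCont[OF der[OF \<open>0 < ts\<close> that]] by (simp add: isCont_def filterlim_at_split)
    have "eventually (\<lambda>s. s \<in> {0<..<ts}) (at_left ts)"
      by (rule eventually_at_left_real[OF \<open>0 < ts\<close>])
    then show "eventually (\<lambda>s. 0 \<le> \<phi> s y) (at_left ts)"
    proof eventually_elim
      case (elim s)
      then show ?case using before[of s y] that by simp
    qed
  qed simp
  then have "\<phi> ts z = 0" using ts by (simp add: order_antisym)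
  then obtain d where d: "0 < d" "\<And>h. 0 < h \<Longrightarrow> h < d \<Longrightarrow> \<phi> (ts - h) z < \<phi> ts z"
    using DERIV_pos_inc_left[OF der[OF \<open>0 < ts\<close> ts(2)] barrier[OF \<open>0 < ts\<close> ts(2)]] touch
    by blast
  define h where "h = min d ts / 2"
  have "0 < h" "h < d" "h < ts" using d(1) \<open>0 < ts\<close> by (auto simp: h_def)
  then have "\<phi> (ts - h) z < 0" using d(2) \<open>\<phi> ts z = 0\<close> by simp
  moreover have "0 < \<phi> (ts - h) z" using before[of "ts - h" z] \<open>0 < h\<close> \<open>h < ts\<close> ts(2) by simp
  ultimately show False by simp
qed

section \<open>Eigenvalues\<close>

lemma self_adjoint_eigenvectors_orthogonal:
  assumes "self_adjoint W" "W *v u = complex_of_real l *s u" "W *v v = complex_of_real m *s v"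
    and "l \<noteq> m"
  shows "cinner u v = 0"
proof -
  have "complex_of_real m * cinner u v = cinner u (W *v v)"
    by (simp add: assms(3) cinner_scale_right)
  also have "\<dots> = cinner (W *v u) v"
    using assms(1) by (simp add: cinner_madj self_adjoint_def)
  also have "\<dots> = complex_of_real l * cinner u v"
    by (simp add: assms(2) cinner_scale_left)
  finally show ?thesis using \<open>l \<noteq> m\<close> by simp
qed

lemma finite_real_eigenvalues:
  assumes "self_adjoint (W::'n::finite op)"
  shows "finite {l::real. is_eigenvalue W (of_real l)}"
proof -
  define E where "E = {l::real. is_eigenvalue W (of_real l)}"
  define f where "f l = (SOME v. v \<noteq> 0 \<and> W *v v = complex_of_real l *s v)" for l
  have f: "f l \<noteq> 0 \<and> W *v f l = complex_of_real l *s f l" if "l \<in> E" for l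
    using that unfolding f_def E_def is_eigenvalue_def mem_Collect_eq by (rule someI_ex)
  have "inj_on f E"
  proof (rule inj_onI)
    fix l m assume lm: "l \<in> E" "m \<in> E" "f l = f m"
    obtain i where "f l $ i \<noteq> 0" using f[OF lm(1)] by (auto simp: vec_eq_iff)
    moreover have "complex_of_real l * f l $ i = complex_of_real m * f l $ i"
      using f[OF lm(1)] f[OF lm(2)] lm(3) by (metis vector_smult_component)
    ultimately show "l = m" by simp
  qed
  moreover have "pairwise orthogonal (f ` E)"
    unfolding pairwise_def orthogonal_def
  proof (intro ballI impI)
    fix x y assume "x \<in> f ` E" "y \<in> f ` E" "x \<noteq> y"
    then obtain l m where "l \<in> E" "x = f l" "m \<in> E" "y = f m" "l \<noteq> m" by auto
    then have "cinner x y = 0"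
      using self_adjoint_eigenvectors_orthogonal[OF assms] f by blast
    then show "x \<bullet> y = 0" by (simp add: inner_eq_Re_cinner)
  qed
  moreover have "0 \<notin> f ` E" using f by auto
  ultimately have "finite (f ` E)"
    using pairwise_orthogonal_independent independent_bound by blast
  then show ?thesis using finite_imageD[OF _ \<open>inj_on f E\<close>] by (simp add: E_def)
qed

lemma psd_eigenvalue_nonneg:
  assumes "psd W" and "is_eigenvalue W (of_real l)"
  shows "0 \<le> l"
proof -
  obtain v where v: "v \<noteq> 0" "W *v v = complex_of_real l *s v"
    using assms(2) by (auto simp: is_eigenvalue_def)
  have "Re (qf W v) = l * (norm v)^2"
    by (simp add: qf_def v cinner_scale_right cinner_self)
  moreover have "0 \<le> Re (qf W v)" using assms(1) psd_iff_qf by blast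
  ultimately show ?thesis using v(1) by (simp add: zero_le_mult_iff)
qed

lemma min_eig_eq_0_of_annihilated_state:
  assumes "psd W" "density_state \<sigma>" "W ** \<sigma> = 0"
  shows "min_eig W = 0"
proof -
  have "\<sigma> \<noteq> 0" using assms(2) by (auto simp: density_state_def trace_def)
  then obtain j where j: "\<sigma> *v axis j 1 \<noteq> 0"
    by (metis matrix_vector_mult_axis vec_eq_iff zero_index)
  have "W *v (\<sigma> *v axis j 1) = 0" by (simp add: matrix_vector_mul_assoc assms(3))
  then have "is_eigenvalue W (of_real 0)"
    using j unfolding is_eigenvalue_def by (intro exI[of _ "\<sigma> *v axis j 1"]) simp
  then show ?thesis
    unfolding min_eig_def
    using finite_real_eigenvalues[OF psd_self_adjoint[OF assms(1)]]
      psd_eigenvalue_nonneg[OF assms(1)]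
    by (intro Min_eqI) auto
qed

section \<open>Trajectories of the Lindblad equation\<close>

lemma bounded_linear_trace_left:
  fixes A :: "'n::finite op"
  shows "bounded_linear (\<lambda>X::'n op. trace (A ** X))"
  using linear_trace_left[of A] linear_conv_bounded_linear by blast

lemma bounded_linear_expval: "bounded_linear (\<lambda>\<sigma>. expval X \<sigma>)"
  unfolding expval_def by (rule bounded_linear_compose[OF bounded_linear_Re bounded_linear_trace_left])

lemma bounded_linear_madj: "bounded_linear (madj :: 'n::finite op \<Rightarrow> 'n op)"
  using linear_madj linear_conv_bounded_linear by blast

lemma bounded_linear_lindblad: "bounded_linear (lindblad H K L)"
  using linear_lindblad linear_conv_bounded_linear by blast

lemma bounded_linear_Re_qf: "bounded_linear (\<lambda>A::'n::finite op. Re (qf A x))"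
proof -
  have "linear (\<lambda>A::'n op. Re (qf A x))"
    by (rule linearI) (simp_all add: qf_add qf_scaleR)
  then show ?thesis by (simp add: linear_conv_bounded_linear)
qed

lemma has_real_derivative_bounded_linear:
  "bounded_linear f \<Longrightarrow> (\<rho> has_vector_derivative \<rho>') F
    \<Longrightarrow> ((\<lambda>t. f (\<rho> t) :: real) has_real_derivative f \<rho>') F"
  by (simp add: bounded_linear.has_vector_derivative has_real_derivative_iff_has_vector_derivative)

lemma lindblad_pushes_into_psd_cone:
  fixes \<rho> :: "'n::finite op" and c :: real
  defines "\<sigma> \<equiv> \<rho> + c *\<^sub>R mat 1"
  assumes "psd \<sigma>" "\<sigma> *v x = 0" "0 < c" "norm x = 1"
  shows "0 < Re (qf (lindblad H K L \<rho>) x) + c * (entrywise_norm (lindblad H K L (mat 1)) + 1)"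
proof -
  have "0 \<le> Re (qf (lindblad H K L \<sigma>) x)"
    using assms by (intro qf_lindblad_nonneg_on_kernel)
  also have "lindblad H K L \<sigma> = lindblad H K L \<rho> + c *\<^sub>R lindblad H K L (mat 1)"
    unfolding \<sigma>_def by (simp add: linear_add[OF linear_lindblad] linear_scale[OF linear_lindblad])
  finally have "- Re (qf (lindblad H K L \<rho>) x) \<le> c * Re (qf (lindblad H K L (mat 1)) x)"
    by (simp add: qf_add qf_scaleR)
  also have "\<dots> \<le> c * entrywise_norm (lindblad H K L (mat 1))"
    using cmod_qf_le[of "lindblad H K L (mat 1)" x] complex_Re_le_cmod \<open>norm x = 1\<close> \<open>0 < c\<close>
    by (intro mult_left_mono) (auto intro: order_trans)
  finally show ?thesis using \<open>0 < c\<close> by (simp add: algebra_simps)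
qed

locale lindblad_trajectory =
  fixes H :: "'n::finite op" and K :: nat and L :: "nat \<Rightarrow> 'n op" and \<rho> :: "real \<Rightarrow> 'n op"
  assumes H_sa: "self_adjoint H"
    and init: "density_state (\<rho> 0)"
    and ode: "\<And>t. 0 \<le> t \<Longrightarrow> (\<rho> has_vector_derivative lindblad H K L (\<rho> t)) (at t within {0..})"
begin

lemma continuous_on_trajectory: "continuous_on {0..} \<rho>"
  using ode by (intro continuous_on_vector_derivative) auto

lemma self_adjoint_trajectory:
  assumes "0 \<le> t"
  shows "self_adjoint (\<rho> t)"
proof -
  define A where "A t = \<rho> t - madj (\<rho> t)" for t
  have "(A has_vector_derivative lindblad H K L (A s)) (at s within {0..})" if "0 \<le> s" for s
  proof -
    have "(A has_vector_derivative lindblad H K L (\<rho> s) - madj (lindblad H K L (\<rho> s)))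
        (at s within {0..})"
      unfolding A_def
      by (intro has_vector_derivative_diff ode[OF that]
          bounded_linear.has_vector_derivative[OF bounded_linear_madj])
    then show ?thesis
      by (simp add: A_def madj_lindblad[OF H_sa] linear_diff[OF linear_lindblad])
  qed
  moreover have "A 0 = 0"
    using init psd_self_adjoint[of "\<rho> 0"] by (simp add: A_def density_state_def self_adjoint_def)
  ultimately have "A t = 0"
    by (rule linear_ode_zero[OF _ bounded_linear_lindblad _ assms])
  then show ?thesis by (simp add: A_def self_adjoint_def)
qed

lemma trace_trajectory:
  assumes "0 \<le> t"
  shows "trace (\<rho> t) = 1"
proof -
  have D: "((\<lambda>t. trace (mat 1 ** \<rho> t)) has_vector_derivative 0) (at s within {0..})"
    if "s \<in> {0..}" for s
  proof -
    have "((\<lambda>t. trace (mat 1 ** \<rho> t)) has_vector_derivative trace (mat 1 ** lindblad H K L (\<rho> s)))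
        (at s within {0..})"
      using that by (intro bounded_linear.has_vector_derivative[OF bounded_linear_trace_left] ode) simp
    then show ?thesis by (simp only: matrix_mul_lid trace_lindblad_eq_0)
  qed
  obtain c where c: "\<And>s. s \<in> {0..} \<Longrightarrow> trace (mat 1 ** \<rho> s) = c"
    by (rule has_vector_derivative_zero_constant[OF convex_real_interval(1) D]) blast+
  have "trace (\<rho> t) = trace (\<rho> 0)" using c[of t] c[of 0] assms by simp
  then show ?thesis using init by (simp add: density_state_def)
qed

lemma continuous_on_Re_qf_trajectory:
  "continuous_on ({0..} \<times> S) (\<lambda>p. Re (qf (\<rho> (fst p)) (snd p)))"
proof -
  have inner: "continuous_on ({0..} \<times> S) (\<lambda>p. (\<rho> (fst p), snd p))"
  proof (intro continuous_on_Pair continuous_on_snd continuous_on_id)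
    show "continuous_on ({0..} \<times> S) (\<lambda>p. \<rho> (fst p))"
      by (rule continuous_on_compose2[OF continuous_on_trajectory continuous_on_fst]) auto
  qed
  have outer: "continuous_on UNIV (\<lambda>q::('n op) \<times> (complex^'n). Re (qf (fst q) (snd q)))"
    by (intro continuous_at_imp_continuous_on ballI continuous_Re continuous_qf)
  show ?thesis using continuous_on_compose2[OF outer inner] by simp
qed

lemma trajectory_barrier:
  assumes "0 < s" "0 < c" "norm y = 1"
    and nonneg: "\<And>z. norm z = 1 \<Longrightarrow> 0 \<le> Re (qf (\<rho> s) z) + c"
    and zero: "Re (qf (\<rho> s) y) + c = 0"
  shows "0 < Re (qf (lindblad H K L (\<rho> s)) y) + c * (entrywise_norm (lindblad H K L (mat 1)) + 1)"
proof -
  define \<sigma> where "\<sigma> = \<rho> s + c *\<^sub>R mat 1"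
  have qf_\<sigma>: "Re (qf \<sigma> z) = Re (qf (\<rho> s) z) + c" if "norm z = 1" for z
    using that by (simp add: \<sigma>_def qf_add qf_scaleR qf_mat1)
  have "self_adjoint \<sigma>"
    using self_adjoint_trajectory[of s] \<open>0 < s\<close>
    by (simp add: \<sigma>_def self_adjoint_def madj_add madj_scaleR)
  moreover have "0 \<le> Re (qf \<sigma> z)" if "norm z = 1" for z
    using nonneg[OF that] qf_\<sigma>[OF that] by simp
  ultimately have "psd \<sigma>" by (rule psd_of_unit_vectors)
  moreover have "Re (qf \<sigma> y) = 0" using qf_\<sigma> \<open>norm y = 1\<close> zero by simp
  ultimately have "\<sigma> *v y = 0" by (rule psd_kernel)
  then show ?thesis
    using lindblad_pushes_into_psd_cone[of "\<rho> s" c y H K L] \<open>psd \<sigma>\<close> \<open>0 < c\<close> \<open>norm y = 1\<close>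
    unfolding \<sigma>_def by simp
qed

lemma psd_trajectory_perturbed:
  defines "a \<equiv> entrywise_norm (lindblad H K L (mat 1)) + 1"
  assumes "0 < \<epsilon>" "0 \<le> t" "norm x = 1"
  shows "0 < Re (qf (\<rho> t) x) + \<epsilon> * exp (a * t)"
proof (rule positive_of_barrier[where \<phi> = "\<lambda>t x. Re (qf (\<rho> t) x) + \<epsilon> * exp (a * t)"
      and S = "sphere 0 1"])
  show "continuous_on ({0..} \<times> sphere 0 1) (\<lambda>(t, x). Re (qf (\<rho> t) x) + \<epsilon> * exp (a * t))"
    unfolding case_prod_beta
    by (intro continuous_on_add continuous_on_Re_qf_trajectory continuous_on_mult
        continuous_on_const continuous_on_exp continuous_on_fst continuous_on_id)
  show "0 < Re (qf (\<rho> 0) y) + \<epsilon> * exp (a * 0)" for y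
    using init \<open>0 < \<epsilon>\<close> by (simp add: density_state_def psd_iff_qf add_nonneg_pos)
  show "((\<lambda>s. Re (qf (\<rho> s) y) + \<epsilon> * exp (a * s)) has_real_derivative
      Re (qf (lindblad H K L (\<rho> s)) y) + \<epsilon> * (a * exp (a * s))) (at s)" if "0 < s" for s y
  proof (rule DERIV_add)
    show "((\<lambda>s. Re (qf (\<rho> s) y)) has_real_derivative Re (qf (lindblad H K L (\<rho> s)) y)) (at s)"
      using has_real_derivative_bounded_linear[OF bounded_linear_Re_qf ode, of s y] that
      by (simp add: at_within_Ici_eq_at)
    show "((\<lambda>s. \<epsilon> * exp (a * s)) has_real_derivative \<epsilon> * (a * exp (a * s))) (at s)"
      by (auto intro!: derivative_eq_intros)
  qed
  show "0 < Re (qf (lindblad H K L (\<rho> s)) y) + \<epsilon> * (a * exp (a * s))"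
    if "0 < s" "y \<in> sphere 0 1" "\<forall>z\<in>sphere 0 1. 0 \<le> Re (qf (\<rho> s) z) + \<epsilon> * exp (a * s)"
      "Re (qf (\<rho> s) y) + \<epsilon> * exp (a * s) = 0" for s y
    using trajectory_barrier[of s "\<epsilon> * exp (a * s)" y] that \<open>0 < \<epsilon>\<close>
    by (simp add: a_def algebra_simps)
qed (use assms in simp_all)

lemma psd_trajectory:
  assumes "0 \<le> t"
  shows "psd (\<rho> t)"
proof (rule psd_of_unit_vectors)
  show "self_adjoint (\<rho> t)" using self_adjoint_trajectory[OF assms] .
  fix x :: "complex^'n" assume "norm x = 1"
  define a where "a = entrywise_norm (lindblad H K L (mat 1)) + 1"
  show "0 \<le> Re (qf (\<rho> t) x)"
  proof (rule field_le_epsilon)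
    fix e :: real assume "0 < e"
    then have "0 < Re (qf (\<rho> t) x) + (e / exp (a * t)) * exp (a * t)"
      using psd_trajectory_perturbed[of "e / exp (a * t)" t x] assms \<open>norm x = 1\<close>
      by (simp add: a_def)
    then show "0 \<le> Re (qf (\<rho> t) x) + e" by simp
  qed
qed

lemma density_state_trajectory: "0 \<le> t \<Longrightarrow> density_state (\<rho> t)"
  by (simp add: density_state_def psd_trajectory trace_trajectory)

lemma has_real_derivative_expval:
  assumes "X ** H = H ** X" "0 \<le> t"
  shows "((\<lambda>t. expval X (\<rho> t)) has_real_derivative expval (gen K L X) (\<rho> t)) (at t within {0..})"
  using has_real_derivative_bounded_linear[OF bounded_linear_expval ode[OF assms(2)], of X]
    trace_lindblad_dual[OF assms(1)]
  by (simp add: expval_def)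

lemma expval_tendsto_0_of_ES:
  assumes "psd X" "X ** H = H ** X" "condition_ES K L X"
  shows "((\<lambda>t. expval X (\<rho> t)) \<longlongrightarrow> 0) at_top"
proof -
  obtain c where c: "0 < c" "loewner_le (gen K L X) (- (c *\<^sub>R X))"
    using assms(3) by (auto simp: condition_ES_def)
  have decay: "expval X (\<rho> t) \<le> expval X (\<rho> 0) * exp (- c * t)" if "0 \<le> t" for t
  proof (rule exp_decay_of_deriv_le[OF has_real_derivative_expval[OF assms(2)] _ that])
    show "expval (gen K L X) (\<rho> s) \<le> - c * expval X (\<rho> s)" if "0 < s" for s
      using expval_mono[OF c(2) psd_trajectory[of s]] that by (simp add: expval_neg expval_scaleR)
  qed
  have "((\<lambda>t. exp (- c * t)) \<longlongrightarrow> 0) at_top" using c(1) by real_asymp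
  then have lim: "((\<lambda>t. expval X (\<rho> 0) * exp (- c * t)) \<longlongrightarrow> 0) at_top"
    by (rule tendsto_mult_right_zero)
  show ?thesis
  proof (rule tendsto_sandwich[OF _ _ tendsto_const lim])
    show "eventually (\<lambda>t. 0 \<le> expval X (\<rho> t)) at_top"
      using expval_nonneg[OF assms(1) psd_trajectory] by (intro eventually_at_top_linorderI)
    show "eventually (\<lambda>t. expval X (\<rho> t) \<le> expval X (\<rho> 0) * exp (- c * t)) at_top"
      using decay by (intro eventually_at_top_linorderI)
  qed
qed

lemma expval_below_of_DS:
  assumes "psd X" "self_adjoint X" "X ** H = H ** X" "condition_DS K L X" "0 < v"
  shows "\<exists>t\<ge>0. expval X (\<rho> t) < v"
proof (rule ccontr)
  assume "\<not> ?thesis"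
  then have above: "v \<le> expval X (\<rho> t)" if "0 \<le> t" for t using that by (auto simp: not_less)
  obtain c where c: "0 < c" "loewner_le (c *\<^sub>R X) (dissip K L X)"
    and gen_nonpos: "loewner_le (gen K L X) 0"
    using assms(4) by (auto simp: condition_DS_def)
  define B where "B = entrywise_norm (X ** (- gen K L X) ** X)"
  define \<delta> where "\<delta> = c * v / (2 * (B + 1))"
  have "0 \<le> B" by (simp add: B_def entrywise_norm_nonneg)
  then have "0 < \<delta>" and \<delta>B: "\<delta> * B \<le> c * v / 2"
    using c(1) \<open>0 < v\<close> by (auto simp: \<delta>_def field_simps)
  define F where "F t = expval (X ** X) (\<rho> t) - expval X (\<rho> t) / \<delta>" for t
  obtain t where "0 \<le> t" "entrywise_norm (X ** X) < F t"
  proof (rule unbounded_of_deriv_ge)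
    have "(X ** X) ** H = H ** (X ** X)" using assms(3) by (metis matrix_mul_assoc)
    then show "(F has_real_derivative expval (gen K L (X ** X)) (\<rho> s) - expval (gen K L X) (\<rho> s) / \<delta>)
        (at s within {0..})" if "0 \<le> s" for s
      unfolding F_def[abs_def]
      by (intro DERIV_diff DERIV_cdivide has_real_derivative_expval assms(3) that)
    show "c * v / 2 \<le> expval (gen K L (X ** X)) (\<rho> s) - expval (gen K L X) (\<rho> s) / \<delta>"
      if "0 < s" for s
    proof -
      have "c * v \<le> c * expval X (\<rho> s)"
        using above[of s] that c(1) by (simp add: mult_left_mono)
      also have "\<dots> \<le> expval (dissip K L X) (\<rho> s)"
        using expval_mono[OF c(2) psd_trajectory[of s]] that by (simp add: expval_scaleR)
      finally show ?thesis
        using expval_gen_square_ge_density_state[OF assms(2) gen_nonpos \<open>0 < \<delta>\<close>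
            density_state_trajectory[of s]] \<delta>B[unfolded B_def] that
        by linarith
    qed
  qed (use c(1) \<open>0 < v\<close> in simp)
  moreover have "0 \<le> expval X (\<rho> t) / \<delta>"
    using expval_nonneg[OF assms(1) psd_trajectory[OF \<open>0 \<le> t\<close>]] \<open>0 < \<delta>\<close> by simp
  ultimately show False
    using abs_expval_le[OF density_state_trajectory[OF \<open>0 \<le> t\<close>], of "X ** X"]
    by (simp add: F_def abs_le_iff)
qed

lemma expval_tendsto_0_of_DS:
  assumes "psd X" "self_adjoint X" "X ** H = H ** X" "condition_DS K L X"
  shows "((\<lambda>t. expval X (\<rho> t)) \<longlongrightarrow> 0) at_top"
proof (rule antitone_nonneg_tendsto_0)
  show "expval X (\<rho> b) \<le> expval X (\<rho> a)" if "0 \<le> a" "a \<le> b" for a b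
  proof (rule antitone_of_deriv_nonpos[OF has_real_derivative_expval[OF assms(3)] _ that])
    show "expval (gen K L X) (\<rho> s) \<le> 0" if "0 < s" for s
      using assms(4) expval_mono[of "gen K L X" 0 "\<rho> s"] psd_trajectory[of s] that
      by (simp add: condition_DS_def)
  qed
  show "0 \<le> expval X (\<rho> t)" if "0 \<le> t" for t
    by (rule expval_nonneg[OF assms(1) psd_trajectory[OF that]])
  show "\<exists>t\<ge>0. expval X (\<rho> t) < v" if "0 < v" for v
    by (rule expval_below_of_DS[OF assms that])
qed

lemma limit_point_density_state:
  assumes "limit_point_at_top \<rho> \<sigma>"
  shows "density_state \<sigma>"
proof -
  obtain s where s: "filterlim s at_top sequentially" "(\<lambda>k. \<rho> (s k)) \<longlonglongrightarrow> \<sigma>"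
    using assms by (auto simp: limit_point_at_top_def)
  have "eventually (\<lambda>k. 0 \<le> s k) sequentially" using s(1) by (simp add: filterlim_at_top)
  then have "eventually (\<lambda>k. \<rho> (s k) \<in> {\<sigma>. density_state \<sigma>}) sequentially"
    by eventually_elim (simp add: density_state_trajectory)
  then show ?thesis using Lim_in_closed_set[OF closed_density_states _ _ s(2)] by simp
qed

lemma limit_point_expval:
  assumes "limit_point_at_top \<rho> \<sigma>" and "((\<lambda>t. expval W (\<rho> t)) \<longlongrightarrow> 0) at_top"
  shows "expval W \<sigma> = 0"
proof -
  obtain s where s: "filterlim s at_top sequentially" "(\<lambda>k. \<rho> (s k)) \<longlonglongrightarrow> \<sigma>"
    using assms(1) by (auto simp: limit_point_at_top_def)
  have "(\<lambda>k. expval W (\<rho> (s k))) \<longlonglongrightarrow> expval W \<sigma>"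
    by (rule bounded_linear.tendsto[OF bounded_linear_expval s(2)])
  moreover have "(\<lambda>k. expval W (\<rho> (s k))) \<longlonglongrightarrow> 0"
    using filterlim_compose[OF assms(2) s(1)] by (simp add: o_def)
  ultimately show ?thesis by (rule LIMSEQ_unique)
qed

lemma limit_point_exists: "\<exists>\<sigma>. limit_point_at_top \<rho> \<sigma>"
proof -
  have "bounded (range (\<lambda>n::nat. \<rho> (real n)))"
    unfolding bounded_iff
    by (intro exI[of _ "real CARD('n) * real CARD('n)"])
      (auto intro!: norm_density_state_le density_state_trajectory)
  then obtain \<sigma> r where r: "strict_mono (r::nat \<Rightarrow> nat)" "((\<lambda>n. \<rho> (real n)) \<circ> r) \<longlonglongrightarrow> \<sigma>"
    using bounded_imp_convergent_subsequence by blast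
  have "filterlim (\<lambda>k. real (r k)) at_top sequentially"
    using filterlim_compose[OF filterlim_real_sequentially filterlim_subseq[OF r(1)]]
    by (simp add: o_def)
  then show ?thesis using r(2) by (auto simp: limit_point_at_top_def o_def)
qed

lemma ground_states_of_expval_tendsto_0:
  assumes "psd W" and "((\<lambda>t. expval W (\<rho> t)) \<longlongrightarrow> 0) at_top"
  shows "min_eig W = 0" and "converges_to_ground_states \<rho> W"
proof -
  have limit: "density_state \<sigma> \<and> trace (W ** \<sigma>) = 0 \<and> W ** \<sigma> = 0"
    if "limit_point_at_top \<rho> \<sigma>" for \<sigma>
  proof -
    have "density_state \<sigma>" by (rule limit_point_density_state[OF that])
    moreover from this have "trace (W ** \<sigma>) = 0"
      using trace_eq_expval[OF assms(1)] limit_point_expval[OF that assms(2)]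
      by (simp add: density_state_def)
    ultimately show ?thesis
      using trace_psd_matrix_mult_eq_0[OF assms(1)] by (simp add: density_state_def)
  qed
  obtain \<sigma> where "limit_point_at_top \<rho> \<sigma>" using limit_point_exists by blast
  then show "min_eig W = 0"
    using limit min_eig_eq_0_of_annihilated_state[OF assms(1)] by blast
  then show "converges_to_ground_states \<rho> W"
    using limit by (simp add: converges_to_ground_states_def ground_states_def)
qed

end

theorem lemma16:
  fixes H :: "'n::finite op" and K :: nat and L :: "nat \<Rightarrow> 'n op"
    and N :: nat and Ws :: "nat \<Rightarrow> 'n op" and \<rho> :: "real \<Rightarrow> 'n op"
  assumes H_sa: "self_adjoint H"
    and W_sa: "\<And>l. l < N \<Longrightarrow> self_adjoint (Ws l)"
    and W_comm: "\<And>l. l < N \<Longrightarrow> Ws l ** H = H ** Ws l"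
    and W_psd: "\<And>l. l < N \<Longrightarrow> psd (Ws l)"
    and W_min: "\<And>l. l < N \<Longrightarrow> min_eig (Ws l) = 0"
    and cond: "(\<forall>l<N. condition_ES K L (Ws l)) \<or> (\<forall>l<N. condition_DS K L (Ws l))"
    and init: "density_state (\<rho> 0)"
    and ode: "\<And>t. t \<ge> 0 \<Longrightarrow>
               (\<rho> has_vector_derivative lindblad H K L (\<rho> t)) (at t within {0..})"
  shows "converges_to_ground_states \<rho> (\<Sum>l<N. Ws l)
         \<and> lyapunov_op K L (\<Sum>l<N. Ws l)"
proof -
  interpret lindblad_trajectory H K L \<rho> using H_sa init ode by unfold_locales
  have ES_or_DS: "condition_ES K L (Ws l) \<or> condition_DS K L (Ws l)" if "l < N" for l
    using cond that by blast
  have "((\<lambda>t. expval (Ws l) (\<rho> t)) \<longlongrightarrow> 0) at_top" if "l < N" for l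
    using ES_or_DS[OF that] expval_tendsto_0_of_ES expval_tendsto_0_of_DS
      W_psd[OF that] W_sa[OF that] W_comm[OF that] by blast
  then have "((\<lambda>t. expval (\<Sum>l<N. Ws l) (\<rho> t)) \<longlongrightarrow> 0) at_top"
    unfolding expval_sum by (intro tendsto_null_sum) simp
  moreover have psd_W: "psd (\<Sum>l<N. Ws l)" by (rule psd_sum[OF W_psd])
  ultimately have "min_eig (\<Sum>l<N. Ws l) = 0 \<and> converges_to_ground_states \<rho> (\<Sum>l<N. Ws l)"
    using ground_states_of_expval_tendsto_0 by blast
  moreover have "loewner_le (gen K L (Ws l)) 0" if "l < N" for l
    using ES_or_DS[OF that] loewner_le_gen_0_of_ES[OF W_psd[OF that]]
    by (auto simp: condition_DS_def)
  then have "loewner_le (gen K L (\<Sum>l<N. Ws l)) 0" by (rule loewner_le_gen_sum_0)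
  ultimately show ?thesis
    using self_adjoint_sum[OF W_sa] psd_W by (simp add: lyapunov_op_def)
qed

end
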